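(* Let $\Pi=(\mathcal{S},\mathcal{R})$ be a stably (resp. haltingly) correct CRN protocol (with respect to some interface). Then there exist a runtime policy $\varrho$ and a function $f:\mathbb{Z}_{\ge1}\to\mathbb{R}_{\ge0}$ such that for every integer $n\ge1$, every execution $\eta\in\mathcal{F}(n)$ and every skipping policy $\sigma$, the stabilization runtime $\operatorname{RT}_{\mathrm{stab}}^{\varrho,\sigma}(\eta)$ (resp. halting runtime $\operatorname{RT}_{\mathrm{halt}}^{\varrho,\sigma}(\eta)$) is at most $f(n)$.
   Context: Model. A CRN protocol $\Pi=(\mathcal{S},\mathcal{R})$ has a finite species set $\mathcal{S}$ and finite reaction set $\mathcal{R}\subset\mathbb{N}^{\mathcal{S}}\times\mathbb{N}^{\mathcal{S}}$; each reaction $(\mathbf{r},\mathbf{p})$ has $\|\mathbf{r}\|_1\in\{1,2\}$ and $\|\mathbf{r}\|_1\le\|\mathbf{p}\|_1$; for each $\mathbf{r}$ with $1\le\|\mathbf{r}\|_1\le2$ the set $\mathcal{R}(\mathbf{r})$ of reactions with reactants $\mathbf{r}$ is nonempty; void reactions have $\mathbf{r}=\mathbf{p}$, and if $(\mathbf{r},\mathbf{r})\in\mathcal{R}$ then $\mathcal{R}(\mathbf{r})=\{(\mathbf{r},\mathbf{r})\}$; $\operatorname{NV}(\mathcal{R})$ = non-void reactions. Configurations $\mathbf{c}\in\mathbb{N}^{\mathcal{S}}$ with $\|\mathbf{c}\|_1\ge1$; $(\mathbf{r},\mathbf{p})$ is applicable to $\mathbf{c}$ if $\mathbf{r}\le\mathbf{c}$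 and yields $\mathbf{c}-\mathbf{r}+\mathbf{p}$; $\operatorname{app}(\mathbf{c})$ applicable reactions, $\overline{\operatorname{app}}(\mathbf{c})=\mathcal{R}\setminus\operatorname{app}(\mathbf{c})$; $\stackrel{*}{\rightharpoonup}$ reachability; the protocol respects finite density ($\mathbf{c}\stackrel{*}{\rightharpoonup}\mathbf{c}'\Rightarrow\|\mathbf{c}'\|_1\le O(\|\mathbf{c}\|_1)$). $\mathrm{stab}(Z)=\{\mathbf{c}\in Z:\mathbf{c}\stackrel{*}{\rightharpoonup}\mathbf{c}'\Rightarrow\mathbf{c}'\in Z\}$, $\mathrm{halt}(Z)=\{\mathbf{c}\in Z:\mathbf{c}\stackrel{*}{\rightharpoonup}\mathbf{c}'\Rightarrow\mathbf{c}'=\mathbf{c}\}$. Executions $\eta=\langle\mathbf{c}^t,\alpha^t\rangle_{t\ge0}$ ($\alpha^t\in\operatorname{app}(\mathbf{c}^t)$, $\mathbf{c}^{t+1}=\alpha^t(\mathbf{c}^t)$) are weakly fair if for all $t$ and $\alpha\in\operatorname{app}(\mathbf{c}^t)$ there is $t'\ge t$ with $\alpha^{t'}=\alpha$ or $\alpha\notin\operatorname{app}(\mathbf{c}^{t'})$. An interface $\mathcal{I}=(\mathcal{U},\mu,\mathcal{C})$ ($\mu:\mathcal{S}\to\mathcal{U}$, $\mathcal{C}\subseteq\mathbb{N}^{\mathcal{U}}\times\mathbb{N}^{\mathcal{U}}$, $\mu(\mathbf{c})(u)=\sum_{\mu(A)=u}\mathbf{c}(A)$) gives $Z_{\mathcal{I}}(\mathbf{c}^0)=\{\mathbf{c}:(\mu(\mathbf{c}^0),\mu(\mathbf{c}))\in\mathcal{C}\}$;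 $\mathbf{c}^0$ is valid if this is nonempty; $\Pi$ is stably (haltingly) correct if every weakly fair execution from a valid $\mathbf{c}^0$ reaches $\mathrm{stab}(Z_{\mathcal{I}}(\mathbf{c}^0))$ ($\mathrm{halt}(Z_{\mathcal{I}}(\mathbf{c}^0))$); the first such step is the stabilization (halting) step. Stochastic scheduler. With volume $\varphi>0$, the propensity of $\alpha=(\mathbf{r},\mathbf{p})$ in $\mathbf{c}$ is $\pi_{\mathbf{c}}(\alpha)=\mathbf{c}(A)/|\mathcal{R}(\mathbf{r})|$ if $\mathbf{r}=A$; $\frac1\varphi\binom{\mathbf{c}(A)}{2}/|\mathcal{R}(\mathbf{r})|$ if $\mathbf{r}=2A$; $\frac1\varphi\mathbf{c}(A)\mathbf{c}(B)/|\mathcal{R}(\mathbf{r})|$ if $\mathbf{r}=A+B$, $A\ne B$; $\pi_{\mathbf{c}}(Q)=\sum_{\alpha\in Q}\pi_{\mathbf{c}}(\alpha)$, $\pi_{\mathbf{c}}=\pi_{\mathbf{c}}(\mathcal{R})$. A stochastic execution picks $\alpha^t$ with probability $\pi_{\mathbf{c}^t}(\alpha)/\pi_{\mathbf{c}^t}$; step $t$ has time span $1/\pi_{\mathbf{c}^t}$. The volume is $\varphi=\Theta(n)$ with $n$ the initial molecular count. Runtime. For an execution $\eta$, step $t$ and $Q\subseteq\mathcal{R}$, $\tau(\eta,t,Q)$ is the least $s>t$ with $\alpha^{s-1}\in Q$ or $Q\subseteq\bigcup_{t\le t'\le s}\overline{\operatorname{app}}(\mathbf{c}^{t'})$. A runtime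 policy $\varrho$ maps each configuration $\mathbf{c}$ to $\varrho(\mathbf{c})\subseteq\operatorname{NV}(\mathcal{R})$; a skipping policy $\sigma$ maps each step $t$ to $\sigma(t)\ge t$. Rounds of a weakly fair $\eta$: $t(0)=0$, effective step $t_e(i)=\sigma(t(i))$, effective configuration $\mathbf{e}^i=\mathbf{c}^{t_e(i)}$, $t(i+1)=\tau(\eta,t_e(i),\varrho(\mathbf{e}^i))$. Temporal cost: $\operatorname{TC}^{\varrho}(\mathbf{c})=\mathbb{E}\big[\sum_{t=0}^{\tau(\eta_r,0,\varrho(\mathbf{c}))-1}1/\pi_{\mathbf{c}_r^t}\big]$ for a stochastic execution $\eta_r=\langle\mathbf{c}_r^t,\alpha_r^t\rangle$ from $\mathbf{c}$. The runtime of the prefix of $\eta$ before step $t^*$ is $\sum_{i=0}^{i^*-1}\operatorname{TC}^{\varrho}(\mathbf{e}^i)$ with $i^*=\min\{i:t(i)\ge t^*\}$; $\operatorname{RT}_{\mathrm{stab}}^{\varrho,\sigma}(\eta)$ (resp. $\operatorname{RT}_{\mathrm{halt}}^{\varrho,\sigma}(\eta)$) is this with $t^*$ the stabilization (halting) step. $\mathcal{F}(n)$ is the set of weakly fair executions from valid initial configurations of molecular count $n$. *)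

theory Defs
  imports "HOL-Analysis.Analysis"
begin

type_synonym 's config = "'s \<Rightarrow> nat"
type_synonym 's reaction = "'s config \<times> 's config"

definition csize :: "'s::finite config \<Rightarrow> nat" where
  "csize c = (\<Sum>A\<in>UNIV. c A)"

definition Rr :: "'s reaction set \<Rightarrow> 's config \<Rightarrow> 's reaction set" where
  "Rr R r = {\<alpha>\<in>R. fst \<alpha> = r}"

definition NV :: "'s reaction set \<Rightarrow> 's reaction set" where
  "NV R = {\<alpha>\<in>R. fst \<alpha> \<noteq> snd \<alpha>}"

definition app :: "'s reaction set \<Rightarrow> 's config \<Rightarrow> 's reaction set" where
  "app R c = {\<alpha>\<in>R. fst \<alpha> \<le> c}"

definition nonapp :: "'s reaction set \<Rightarrow> 's config \<Rightarrow> 's reaction set" where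
  "nonapp R c = R - app R c"

text \<open>Result of applying (r,p) to c (meaningful when r \<le> c): c - r + p.\<close>
definition apply_r :: "'s reaction \<Rightarrow> 's config \<Rightarrow> 's config" where
  "apply_r \<alpha> c = (\<lambda>A. c A - fst \<alpha> A + snd \<alpha> A)"

definition step :: "'s reaction set \<Rightarrow> 's config \<Rightarrow> 's config \<Rightarrow> bool" where
  "step R c c' \<longleftrightarrow> (\<exists>\<alpha>\<in>app R c. c' = apply_r \<alpha> c)"

definition reach :: "'s reaction set \<Rightarrow> 's config \<Rightarrow> 's config \<Rightarrow> bool" where
  "reach R = (step R)\<^sup>*\<^sup>*"

definition crn :: "'s::finite reaction set \<Rightarrow> bool" where
  "crn R \<longleftrightarrow>
     finite R \<and>
     (\<forall>(r,p)\<in>R. (csize r = 1 \<or> csize r = 2) \<and> csize r \<le> csize p) \<and>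
     (\<forall>r. 1 \<le> csize r \<and> csize r \<le> 2 \<longrightarrow> Rr R r \<noteq> {}) \<and>
     (\<forall>r. (r,r) \<in> R \<longrightarrow> Rr R r = {(r,r)}) \<and>
     (\<exists>K::nat. \<forall>c c'. 1 \<le> csize c \<longrightarrow> reach R c c' \<longrightarrow> csize c' \<le> K * csize c)"

definition cmap :: "('s::finite \<Rightarrow> 'u) \<Rightarrow> 's config \<Rightarrow> 'u config" where
  "cmap \<mu> c = (\<lambda>u. \<Sum>A\<in>{A. \<mu> A = u}. c A)"

definition Zset :: "('s::finite \<Rightarrow> 'u) \<Rightarrow> ('u config \<times> 'u config) set \<Rightarrow> 's config \<Rightarrow> 's config set" where
  "Zset \<mu> C c0 = {c. 1 \<le> csize c \<and> (cmap \<mu> c0, cmap \<mu> c) \<in> C}"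

definition valid :: "('s::finite \<Rightarrow> 'u) \<Rightarrow> ('u config \<times> 'u config) set \<Rightarrow> 's config \<Rightarrow> bool" where
  "valid \<mu> C c0 \<longleftrightarrow> 1 \<le> csize c0 \<and> Zset \<mu> C c0 \<noteq> {}"

definition stab :: "'s reaction set \<Rightarrow> 's config set \<Rightarrow> 's config set" where
  "stab R Z = {c\<in>Z. \<forall>c'. reach R c c' \<longrightarrow> c' \<in> Z}"

definition halt :: "'s reaction set \<Rightarrow> 's config set \<Rightarrow> 's config set" where
  "halt R Z = {c\<in>Z. \<forall>c'. reach R c c' \<longrightarrow> c' = c}"

definition execution :: "'s reaction set \<Rightarrow> (nat \<Rightarrow> 's config) \<Rightarrow> (nat \<Rightarrow> 's reaction) \<Rightarrow> bool" where
  "execution R c \<alpha> \<longleftrightarrow> (\<forall>t. \<alpha> t \<in> app R (c t) \<and> c (Suc t) = apply_r (\<alpha> t) (c t))"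

definition weakly_fair :: "'s reaction set \<Rightarrow> (nat \<Rightarrow> 's config) \<Rightarrow> (nat \<Rightarrow> 's reaction) \<Rightarrow> bool" where
  "weakly_fair R c \<alpha> \<longleftrightarrow>
     (\<forall>t. \<forall>\<beta>\<in>app R (c t). \<exists>t'\<ge>t. \<alpha> t' = \<beta> \<or> \<beta> \<notin> app R (c t'))"

definition stably_correct :: "'s::finite reaction set \<Rightarrow> ('s \<Rightarrow> 'u) \<Rightarrow> ('u config \<times> 'u config) set \<Rightarrow> bool" where
  "stably_correct R \<mu> C \<longleftrightarrow>
     (\<forall>c \<alpha>. valid \<mu> C (c 0) \<and> execution R c \<alpha> \<and> weakly_fair R c \<alpha> \<longrightarrow>
        (\<exists>t. c t \<in> stab R (Zset \<mu> C (c 0))))"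

definition haltingly_correct :: "'s::finite reaction set \<Rightarrow> ('s \<Rightarrow> 'u) \<Rightarrow> ('u config \<times> 'u config) set \<Rightarrow> bool" where
  "haltingly_correct R \<mu> C \<longleftrightarrow>
     (\<forall>c \<alpha>. valid \<mu> C (c 0) \<and> execution R c \<alpha> \<and> weakly_fair R c \<alpha> \<longrightarrow>
        (\<exists>t. c t \<in> halt R (Zset \<mu> C (c 0))))"

definition stab_step :: "'s::finite reaction set \<Rightarrow> ('s \<Rightarrow> 'u) \<Rightarrow> ('u config \<times> 'u config) set \<Rightarrow> (nat \<Rightarrow> 's config) \<Rightarrow> nat" where
  "stab_step R \<mu> C c = (LEAST t. c t \<in> stab R (Zset \<mu> C (c 0)))"

definition halt_step :: "'s::finite reaction set \<Rightarrow> ('s \<Rightarrow> 'u) \<Rightarrow> ('u config \<times> 'u config) set \<Rightarrow> (nat \<Rightarrow> 's config) \<Rightarrow> nat" where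
  "halt_step R \<mu> C c = (LEAST t. c t \<in> halt R (Zset \<mu> C (c 0)))"

definition Fset :: "'s::finite reaction set \<Rightarrow> ('s \<Rightarrow> 'u) \<Rightarrow> ('u config \<times> 'u config) set \<Rightarrow> nat
      \<Rightarrow> ((nat \<Rightarrow> 's config) \<times> (nat \<Rightarrow> 's reaction)) set" where
  "Fset R \<mu> C n = {(c,\<alpha>). execution R c \<alpha> \<and> weakly_fair R c \<alpha> \<and> valid \<mu> C (c 0) \<and> csize (c 0) = n}"

definition propensity :: "real \<Rightarrow> 's::finite reaction set \<Rightarrow> 's config \<Rightarrow> 's reaction \<Rightarrow> real" where
  "propensity \<phi> R c \<alpha> =
     (let r = fst \<alpha>; k = real (card (Rr R r)) in
      if csize r = 1 then real (c (THE A. r A = 1)) / k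
      else if csize r = 2 \<and> (\<exists>A. r A = 2) then
        (1 / \<phi>) * real (c (THE A. r A = 2) choose 2) / k
      else if csize r = 2 then
        (1 / \<phi>) * (\<Prod>A\<in>{A. r A = 1}. real (c A)) / k
      else 0)"

definition tot_propensity :: "real \<Rightarrow> 's::finite reaction set \<Rightarrow> 's config \<Rightarrow> real" where
  "tot_propensity \<phi> R c = (\<Sum>\<alpha>\<in>R. propensity \<phi> R c \<alpha>)"

definition tau :: "'s reaction set \<Rightarrow> (nat \<Rightarrow> 's config) \<Rightarrow> (nat \<Rightarrow> 's reaction) \<Rightarrow> nat
      \<Rightarrow> 's reaction set \<Rightarrow> nat" where
  "tau R c \<alpha> t Q = (LEAST s. t < s \<and> (\<alpha> (s - 1) \<in> Q \<or> Q \<subseteq> (\<Union>t'\<in>{t..s}. nonapp R (c t'))))"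

text \<open>Finite prefixes of a stochastic execution from c0 are described by their list of
reactions; the configuration after the first i steps is cfg_at c0 as i.\<close>
definition cfg_at :: "'s config \<Rightarrow> 's reaction list \<Rightarrow> nat \<Rightarrow> 's config" where
  "cfg_at c0 as i = fold apply_r (take i as) c0"

definition path_prob :: "real \<Rightarrow> 's::finite reaction set \<Rightarrow> 's config \<Rightarrow> 's reaction list \<Rightarrow> real" where
  "path_prob \<phi> R c0 as =
     (\<Prod>i<length as. propensity \<phi> R (cfg_at c0 as i) (as ! i) / tot_propensity \<phi> R (cfg_at c0 as i))"

text \<open>The event tau(eta_r, 0, Q) > t, which is determined by the first t steps.\<close>
definition not_stopped :: "'s reaction set \<Rightarrow> 's reaction set \<Rightarrow> 's config \<Rightarrow> 's reaction list \<Rightarrow> nat \<Rightarrow> bool" where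
  "not_stopped R Q c0 as t \<longleftrightarrow>
     (\<forall>s. 0 < s \<and> s \<le> t \<longrightarrow>
        \<not> (as ! (s - 1) \<in> Q \<or> Q \<subseteq> (\<Union>t'\<in>{0..s}. nonapp R (cfg_at c0 as t'))))"

text \<open>Temporal cost TC(c0) = E[ sum_{t < tau(eta_r,0,Q)} 1/pi_{c_r^t} ] with Q = rho(c0),
  written out (Tonelli) as sum over t of E[1{tau > t} / pi_{c_r^t}], the expectation
  being the sum over all length-t reaction prefixes weighted by their probability.\<close>
definition TC :: "real \<Rightarrow> 's::finite reaction set \<Rightarrow> 's reaction set \<Rightarrow> 's config \<Rightarrow> ennreal" where
  "TC \<phi> R Q c0 =
     (\<Sum>t. \<Sum>as\<in>{as. set as \<subseteq> R \<and> length as = t}.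
        (if not_stopped R Q c0 as t
         then ennreal (path_prob \<phi> R c0 as) * ennreal (1 / tot_propensity \<phi> R (cfg_at c0 as t))
         else 0))"

definition runtime_policy :: "'s reaction set \<Rightarrow> ('s config \<Rightarrow> 's reaction set) \<Rightarrow> bool" where
  "runtime_policy R \<rho> \<longleftrightarrow> (\<forall>c. \<rho> c \<subseteq> NV R)"

definition skipping_policy :: "(nat \<Rightarrow> nat) \<Rightarrow> bool" where
  "skipping_policy \<sigma> \<longleftrightarrow> (\<forall>t. t \<le> \<sigma> t)"

primrec round_start :: "'s reaction set \<Rightarrow> (nat \<Rightarrow> 's config) \<Rightarrow> (nat \<Rightarrow> 's reaction)
     \<Rightarrow> ('s config \<Rightarrow> 's reaction set) \<Rightarrow> (nat \<Rightarrow> nat) \<Rightarrow> nat \<Rightarrow> nat" where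
  "round_start R c \<alpha> \<rho> \<sigma> 0 = 0"
| "round_start R c \<alpha> \<rho> \<sigma> (Suc i) =
     tau R c \<alpha> (\<sigma> (round_start R c \<alpha> \<rho> \<sigma> i)) (\<rho> (c (\<sigma> (round_start R c \<alpha> \<rho> \<sigma> i))))"

definition eff_config :: "'s reaction set \<Rightarrow> (nat \<Rightarrow> 's config) \<Rightarrow> (nat \<Rightarrow> 's reaction)
     \<Rightarrow> ('s config \<Rightarrow> 's reaction set) \<Rightarrow> (nat \<Rightarrow> nat) \<Rightarrow> nat \<Rightarrow> 's config" where
  "eff_config R c \<alpha> \<rho> \<sigma> i = c (\<sigma> (round_start R c \<alpha> \<rho> \<sigma> i))"

definition prefix_runtime :: "real \<Rightarrow> 's::finite reaction set \<Rightarrow> (nat \<Rightarrow> 's config) \<Rightarrow> (nat \<Rightarrow> 's reaction)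
     \<Rightarrow> ('s config \<Rightarrow> 's reaction set) \<Rightarrow> (nat \<Rightarrow> nat) \<Rightarrow> nat \<Rightarrow> ennreal" where
  "prefix_runtime \<phi> R c \<alpha> \<rho> \<sigma> tstar =
     (\<Sum>i < (LEAST i. tstar \<le> round_start R c \<alpha> \<rho> \<sigma> i).
        TC \<phi> R (\<rho> (eff_config R c \<alpha> \<rho> \<sigma> i)) (eff_config R c \<alpha> \<rho> \<sigma> i))"

definition RT_stab :: "real \<Rightarrow> 's::finite reaction set \<Rightarrow> ('s \<Rightarrow> 'u) \<Rightarrow> ('u config \<times> 'u config) set
     \<Rightarrow> (nat \<Rightarrow> 's config) \<Rightarrow> (nat \<Rightarrow> 's reaction) \<Rightarrow> ('s config \<Rightarrow> 's reaction set) \<Rightarrow> (nat \<Rightarrow> nat) \<Rightarrow> ennreal" where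
  "RT_stab \<phi> R \<mu> C c \<alpha> \<rho> \<sigma> = prefix_runtime \<phi> R c \<alpha> \<rho> \<sigma> (stab_step R \<mu> C c)"

definition RT_halt :: "real \<Rightarrow> 's::finite reaction set \<Rightarrow> ('s \<Rightarrow> 'u) \<Rightarrow> ('u config \<times> 'u config) set
     \<Rightarrow> (nat \<Rightarrow> 's config) \<Rightarrow> (nat \<Rightarrow> 's reaction) \<Rightarrow> ('s config \<Rightarrow> 's reaction set) \<Rightarrow> (nat \<Rightarrow> nat) \<Rightarrow> ennreal" where
  "RT_halt \<phi> R \<mu> C c \<alpha> \<rho> \<sigma> = prefix_runtime \<phi> R c \<alpha> \<rho> \<sigma> (halt_step R \<mu> C c)"

end

theory Submission
  imports Defs
begin

text \<open>
  The runtime policy picks, at an effective configuration \<open>e\<close>, an escape reaction: a non-void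
  reaction that is applicable throughout the strongly connected component of \<open>e\<close> in the
  reachability graph and leads out of it from each of its members. If \<open>e\<close> is not yet in the goal
  set (which is closed under reachability), an escape reaction exists: otherwise a weakly fair
  execution could continue from \<open>e\<close> by repeating forever a closed walk that visits every member of
  the component and fires every reaction keeping it inside, and it would never reach the goal.
  A round driven by an escape reaction ends only after the execution has left the component of
  \<open>e\<close> for good, so the effective configurations of the rounds before stabilization are pairwise
  distinct; by finite density they have size at most \<open>K n\<close>, which bounds the number of rounds.
  A round costs at most \<open>1 / p_min\<close> time, where \<open>p_min = min 1 (1 / \<phi>) / |R|\<close> bounds the
  propensity of every applicable reaction from below: as long as the round lasts its reaction
  stays applicable, so every step ends the round with probability at least \<open>p_min / \<pi>\<close>, and
  the expected elapsed time telescopes.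
\<close>

section \<open>Configurations and propensities\<close>

lemma le_csize: "c A \<le> csize (c::'s::finite config)"
  unfolding csize_def by (rule member_le_sum) auto

lemma add_le_csize:
  assumes "A \<noteq> B" shows "c A + c B \<le> csize (c::'s::finite config)"
proof -
  have "c A + c B = (\<Sum>X\<in>{A, B}. c X)" using assms by simp
  also have "\<dots> \<le> csize c" unfolding csize_def by (rule sum_mono2) auto
  finally show ?thesis .
qed

lemma csize_pos_iff: "0 < csize (c::'s::finite config) \<longleftrightarrow> (\<exists>A. 0 < c A)"
proof -
  have "csize c = 0 \<longleftrightarrow> (\<forall>A. c A = 0)" by (simp add: csize_def)
  then show ?thesis by auto
qed

lemma finite_csize_le: "finite {c :: 's::finite config. csize c \<le> D}"
proof -
  have "{c :: 's config. csize c \<le> D} \<subseteq> Pi\<^sub>E UNIV (\<lambda>_. {..D})"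
    using le_csize by (auto simp: PiE_UNIV_domain Pi_def intro: order_trans)
  then show ?thesis by (rule finite_subset) (auto intro: finite_PiE)
qed

lemma unique_species_of_csize_1:
  assumes "csize r = 1" shows "\<exists>!A. r A = 1"
proof -
  obtain A where "0 < r A" using assms csize_pos_iff[of r] by auto
  with le_csize[of r A] assms have "r A = 1" by simp
  moreover have "B = A" if "r B = 1" for B
    using add_le_csize[of B A r] that \<open>r A = 1\<close> assms by fastforce
  ultimately show ?thesis by blast
qed

lemma unique_species_of_count_2:
  assumes "csize r = 2" "r A = 2" shows "\<exists>!A. r A = 2"
proof -
  have "B = A" if "r B = 2" for B
    using add_le_csize[of B A r] that assms by fastforce
  with assms(2) show ?thesis by blast
qed

lemma crn_finite: "crn R \<Longrightarrow> finite R"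
  unfolding crn_def by (elim conjE)

lemma crn_reaction_size:
  assumes "crn R" "\<beta> \<in> R"
  shows "(csize (fst \<beta>) = 1 \<or> csize (fst \<beta>) = 2) \<and> csize (fst \<beta>) \<le> csize (snd \<beta>)"
proof -
  have "\<forall>(r, p)\<in>R. (csize r = 1 \<or> csize r = 2) \<and> csize r \<le> csize p"
    using assms(1) unfolding crn_def by (elim conjE)
  with assms(2) show ?thesis by (cases \<beta>) auto
qed

lemma crn_finite_density:
  assumes "crn R"
  shows "\<exists>K::nat. \<forall>c c'. 0 < csize c \<longrightarrow> reach R c c' \<longrightarrow> csize c' \<le> K * csize c"
proof -
  have "\<exists>K::nat. \<forall>c c'. 1 \<le> csize c \<longrightarrow> reach R c c' \<longrightarrow> csize c' \<le> K * csize c"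
    using assms unfolding crn_def by (elim conjE)
  then show ?thesis by (simp add: Suc_le_eq)
qed

lemma crn_app_nonempty:
  assumes "crn R" "0 < csize c" shows "app R c \<noteq> {}"
proof -
  obtain A where "0 < c A" using assms(2) csize_pos_iff by blast
  define r where "r = (\<lambda>B. if B = A then 1 else 0 :: nat)"
  have "csize r = 1" by (simp add: r_def csize_def)
  moreover have "\<forall>r. 1 \<le> csize r \<and> csize r \<le> 2 \<longrightarrow> Rr R r \<noteq> {}"
    using assms(1) unfolding crn_def by (elim conjE)
  ultimately obtain \<beta> where "\<beta> \<in> R" "fst \<beta> = r" unfolding Rr_def by fastforce
  moreover have "r \<le> c" using \<open>0 < c A\<close> by (auto simp: r_def le_fun_def)
  ultimately have "\<beta> \<in> app R c" by (simp add: app_def)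
  then show ?thesis by blast
qed

lemma csize_apply_r_pos:
  assumes "crn R" "\<beta> \<in> R" shows "0 < csize (apply_r \<beta> c)"
proof -
  have "0 < csize (snd \<beta>)" using crn_reaction_size[OF assms] by linarith
  then obtain A where "0 < snd \<beta> A" using csize_pos_iff by blast
  then have "0 < apply_r \<beta> c A" by (simp add: apply_r_def)
  then show ?thesis using csize_pos_iff by blast
qed

lemma cfg_at_0 [simp]: "cfg_at c as 0 = c"
  by (simp add: cfg_at_def)

lemma cfg_at_append: "i \<le> length as \<Longrightarrow> cfg_at c (as @ bs) i = cfg_at c as i"
  by (simp add: cfg_at_def)

lemma cfg_at_Suc: "i < length as \<Longrightarrow> cfg_at c as (Suc i) = apply_r (as ! i) (cfg_at c as i)"
  by (simp add: cfg_at_def take_Suc_conv_app_nth)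

lemma csize_cfg_at_pos:
  assumes "crn R" "set as \<subseteq> R" "0 < csize c" shows "0 < csize (cfg_at c as i)"
proof (induction i)
  case 0
  then show ?case using assms(3) by simp
next
  case (Suc i)
  show ?case
  proof (cases "i < length as")
    case True
    then have "as ! i \<in> R" using assms(2) nth_mem by blast
    then show ?thesis using True csize_apply_r_pos[OF assms(1)] by (simp add: cfg_at_Suc)
  next
    case False
    then have "cfg_at c as (Suc i) = cfg_at c as i" by (simp add: cfg_at_def)
    with Suc.IH show ?thesis by simp
  qed
qed

definition min_propensity :: "real \<Rightarrow> 's reaction set \<Rightarrow> real" where
  "min_propensity \<phi> R = min 1 (1 / \<phi>) / real (card R)"

lemma propensity_nonneg: "0 < \<phi> \<Longrightarrow> 0 \<le> propensity \<phi> R c \<beta>"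
  unfolding propensity_def Let_def by (auto intro!: prod_nonneg divide_nonneg_nonneg)

lemma tot_propensity_nonneg: "0 < \<phi> \<Longrightarrow> 0 \<le> tot_propensity \<phi> R c"
  unfolding tot_propensity_def by (auto intro!: sum_nonneg propensity_nonneg)

lemma propensity_le_tot_propensity:
  "finite R \<Longrightarrow> 0 < \<phi> \<Longrightarrow> \<beta> \<in> R \<Longrightarrow> propensity \<phi> R c \<beta> \<le> tot_propensity \<phi> R c"
  unfolding tot_propensity_def by (rule member_le_sum) (auto intro: propensity_nonneg)

lemma propensity_ge_card_Rr:
  assumes "0 < \<phi>" "csize (fst \<beta>) = 1 \<or> csize (fst \<beta>) = 2" "fst \<beta> \<le> c"
  shows "min 1 (1 / \<phi>) / real (card (Rr R (fst \<beta>))) \<le> propensity \<phi> R c \<beta>"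
proof -
  define r where "r = fst \<beta>"
  define k where "k = real (card (Rr R r))"
  have r_le: "r A \<le> c A" for A using assms(3) by (simp add: r_def le_fun_def)
  have bimolecular: "min 1 (1 / \<phi>) \<le> (1 / \<phi>) * m" if "1 \<le> m" for m :: real
  proof -
    have "1 / \<phi> \<le> m / \<phi>" using that assms(1) by (simp add: divide_right_mono)
    then show ?thesis by (simp add: min.coboundedI2)
  qed
  consider (uni) "csize r = 1" | (homo) A where "csize r = 2" "r A = 2"
    | (hetero) "csize r = 2" "\<forall>A. r A \<noteq> 2"
    using assms(2) r_def by blast
  then obtain m where m: "min 1 (1 / \<phi>) \<le> m" "propensity \<phi> R c \<beta> = m / k"
  proof cases
    case uni
    have "r (THE A. r A = 1) = 1" using unique_species_of_csize_1[OF uni] by (rule theI')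
    then have "1 \<le> c (THE A. r A = 1)" using r_le[of "THE A. r A = 1"] by simp
    moreover have "propensity \<phi> R c \<beta> = real (c (THE A. r A = 1)) / k"
      unfolding propensity_def Let_def r_def[symmetric] k_def[symmetric] using uni by simp
    ultimately show ?thesis by (intro that[of "real (c (THE A. r A = 1))"]) (simp_all add: min_le_iff_disj)
  next
    case homo
    have "r (THE A. r A = 2) = 2" using unique_species_of_count_2[OF homo] by (rule theI')
    then have "2 \<le> c (THE A. r A = 2)" using r_le[of "THE A. r A = 2"] by simp
    then have "1 \<le> real (c (THE A. r A = 2) choose 2)"
      using zero_less_binomial[of 2 "c (THE A. r A = 2)"] by linarith
    moreover have "propensity \<phi> R c \<beta> = (1 / \<phi>) * real (c (THE A. r A = 2) choose 2) / k"
      unfolding propensity_def Let_def r_def[symmetric] k_def[symmetric] using homo by auto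
    ultimately show ?thesis by (rule that[OF bimolecular])
  next
    case hetero
    have "1 \<le> real (c A)" if "r A = 1" for A using r_le[of A] that by simp
    then have "1 \<le> (\<Prod>A\<in>{A. r A = 1}. real (c A))" by (intro prod_ge_1) simp
    moreover have "propensity \<phi> R c \<beta> = (1 / \<phi>) * (\<Prod>A\<in>{A. r A = 1}. real (c A)) / k"
      unfolding propensity_def Let_def r_def[symmetric] k_def[symmetric] using hetero by simp
    ultimately show ?thesis by (rule that[OF bimolecular])
  qed
  have "min 1 (1 / \<phi>) / k \<le> m / k" using m(1) by (rule divide_right_mono) (simp add: k_def)
  with m(2) show ?thesis unfolding k_def r_def by simp
qed

lemma propensity_ge_min_propensity:
  assumes "crn R" "0 < \<phi>" "\<beta> \<in> app R c"
  shows "min_propensity \<phi> R \<le> propensity \<phi> R c \<beta>"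
proof -
  have "\<beta> \<in> R" "fst \<beta> \<le> c" using assms(3) by (auto simp: app_def)
  have "finite (Rr R (fst \<beta>))" using crn_finite[OF assms(1)] by (simp add: Rr_def)
  moreover have "\<beta> \<in> Rr R (fst \<beta>)" using \<open>\<beta> \<in> R\<close> by (simp add: Rr_def)
  ultimately have "1 \<le> card (Rr R (fst \<beta>))" by (metis card_0_eq empty_iff less_one not_le)
  moreover have "card (Rr R (fst \<beta>)) \<le> card R"
    using crn_finite[OF assms(1)] by (intro card_mono) (auto simp: Rr_def)
  ultimately have "min_propensity \<phi> R \<le> min 1 (1 / \<phi>) / real (card (Rr R (fst \<beta>)))"
    unfolding min_propensity_def using assms(2) by (intro divide_left_mono) auto
  also have "\<dots> \<le> propensity \<phi> R c \<beta>"
    using crn_reaction_size[OF assms(1) \<open>\<beta> \<in> R\<close>] assms(2) \<open>fst \<beta> \<le> c\<close>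
    by (intro propensity_ge_card_Rr) auto
  finally show ?thesis .
qed

lemma tot_propensity_ge_min_propensity:
  assumes "crn R" "0 < \<phi>" "0 < csize c"
  shows "min_propensity \<phi> R \<le> tot_propensity \<phi> R c"
proof -
  obtain \<beta> where "\<beta> \<in> app R c" using crn_app_nonempty[OF assms(1,3)] by blast
  then have "min_propensity \<phi> R \<le> propensity \<phi> R c \<beta>"
    by (rule propensity_ge_min_propensity[OF assms(1,2)])
  also have "\<dots> \<le> tot_propensity \<phi> R c"
    using \<open>\<beta> \<in> app R c\<close> crn_finite[OF assms(1)] assms(2)
    by (intro propensity_le_tot_propensity) (auto simp: app_def)
  finally show ?thesis .
qed

lemma min_propensity_pos:
  fixes R :: "'s::finite reaction set"
  assumes "crn R" "0 < \<phi>" shows "0 < min_propensity \<phi> R"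
proof -
  have "0 < csize (\<lambda>_::'s. 1::nat)" by (simp add: csize_def)
  then obtain \<beta> where "\<beta> \<in> app R (\<lambda>_. 1)" using crn_app_nonempty[OF assms(1)] by blast
  then have "\<beta> \<in> R" by (simp add: app_def)
  then have "0 < card R" using crn_finite[OF assms(1)] card_gt_0_iff by blast
  then show ?thesis unfolding min_propensity_def using assms(2) by (intro divide_pos_pos) auto
qed

section \<open>Temporal cost of a round\<close>

lemma sum_lists_length_Suc:
  fixes A :: "'a set"
  shows "(\<Sum>xs\<in>{xs. set xs \<subseteq> A \<and> length xs = Suc n}. f xs)
     = (\<Sum>xs\<in>{xs. set xs \<subseteq> A \<and> length xs = n}. \<Sum>a\<in>A. f (xs @ [a]))"
proof -
  let ?L = "{xs. set xs \<subseteq> A \<and> length xs = n}"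
  define snoc where "snoc = (\<lambda>(xs, a). xs @ [a :: 'a])"
  have "{xs. set xs \<subseteq> A \<and> length xs = Suc n} = snoc ` (?L \<times> A)"
    by (auto simp: snoc_def length_Suc_conv_rev image_iff)
  moreover have "inj_on snoc (?L \<times> A)"
    by (auto simp: snoc_def inj_on_def)
  ultimately have "(\<Sum>xs\<in>{xs. set xs \<subseteq> A \<and> length xs = Suc n}. f xs) = sum (f \<circ> snoc) (?L \<times> A)"
    by (simp add: sum.reindex)
  also have "\<dots> = (\<Sum>xs\<in>?L. \<Sum>a\<in>A. f (xs @ [a]))"
    by (simp add: sum.cartesian_product' snoc_def)
  finally show ?thesis .
qed

lemma path_prob_Nil [simp]: "path_prob \<phi> R c [] = 1"
  by (simp add: path_prob_def)

lemma path_prob_snoc: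
  "path_prob \<phi> R c (as @ [\<beta>]) = path_prob \<phi> R c as *
     (propensity \<phi> R (cfg_at c as (length as)) \<beta> / tot_propensity \<phi> R (cfg_at c as (length as)))"
proof -
  have "(\<Prod>i<length as. propensity \<phi> R (cfg_at c (as @ [\<beta>]) i) ((as @ [\<beta>]) ! i)
          / tot_propensity \<phi> R (cfg_at c (as @ [\<beta>]) i)) = path_prob \<phi> R c as"
    unfolding path_prob_def by (rule prod.cong) (auto simp: cfg_at_append nth_append)
  then show ?thesis by (simp add: path_prob_def cfg_at_append)
qed

lemma path_prob_nonneg: "0 < \<phi> \<Longrightarrow> 0 \<le> path_prob \<phi> R c as"
  unfolding path_prob_def
  by (auto intro!: prod_nonneg divide_nonneg_nonneg propensity_nonneg tot_propensity_nonneg)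

lemma not_stopped_0 [simp]: "not_stopped R Q c as 0"
  by (simp add: not_stopped_def)

lemma not_stopped_snocD:
  assumes "not_stopped R Q c (as @ [\<beta>]) (Suc (length as))"
  shows "not_stopped R Q c as (length as)" "\<beta> \<notin> Q"
proof -
  have not_stopped_at:
    "\<not> ((as @ [\<beta>]) ! (s - 1) \<in> Q \<or> Q \<subseteq> (\<Union>t\<in>{0..s}. nonapp R (cfg_at c (as @ [\<beta>]) t)))"
    if "0 < s" "s \<le> Suc (length as)" for s
    using assms that unfolding not_stopped_def by blast
  from not_stopped_at[of "Suc (length as)"] show "\<beta> \<notin> Q" by simp
  show "not_stopped R Q c as (length as)"
    unfolding not_stopped_def
  proof (intro allI impI)
    fix s assume s: "0 < s \<and> s \<le> length as"
    then have "s - 1 < length as" by linarith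
    then have "(as @ [\<beta>]) ! (s - 1) = as ! (s - 1)" by (simp add: nth_append)
    moreover have "(\<Union>t\<in>{0..s}. nonapp R (cfg_at c (as @ [\<beta>]) t)) = (\<Union>t\<in>{0..s}. nonapp R (cfg_at c as t))"
      using s by (auto simp: cfg_at_append)
    ultimately show "\<not> (as ! (s - 1) \<in> Q \<or> Q \<subseteq> (\<Union>t\<in>{0..s}. nonapp R (cfg_at c as t)))"
      using not_stopped_at[of s] s by simp
  qed
qed

lemma not_stopped_empty: "not_stopped R {} c as t \<Longrightarrow> t = 0"
  unfolding not_stopped_def by (cases t) auto

lemma not_stopped_singleton_app:
  assumes "not_stopped R {\<delta>} c as t" "\<delta> \<in> app R c"
  shows "\<delta> \<in> app R (cfg_at c as t)"
proof (cases t)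
  case 0
  then show ?thesis using assms(2) by simp
next
  case (Suc t')
  then have "\<delta> \<notin> nonapp R (cfg_at c as t)" using assms(1) unfolding not_stopped_def by auto
  then show ?thesis using assms(2) by (auto simp: nonapp_def app_def)
qed

text \<open>For a stochastic execution from \<open>c\<close> stopped at \<open>\<tau> = tau(\<eta>, 0, Q)\<close>,
  \<open>survival_prob \<phi> R Q c t\<close> is \<open>P[\<tau> > t]\<close> and \<open>expected_step_time \<phi> R Q c t\<close> is
  \<open>E[1{\<tau> > t} / \<pi>\<^sub>t]\<close>, the \<open>t\<close>-th summand of \<open>TC\<close>.\<close>

definition survival_prob :: "real \<Rightarrow> 's::finite reaction set \<Rightarrow> 's reaction set \<Rightarrow> 's config \<Rightarrow> nat \<Rightarrow> real" where
  "survival_prob \<phi> R Q c t = (\<Sum>as\<in>{as. set as \<subseteq> R \<and> length as = t}.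
      if not_stopped R Q c as t then path_prob \<phi> R c as else 0)"

definition expected_step_time :: "real \<Rightarrow> 's::finite reaction set \<Rightarrow> 's reaction set \<Rightarrow> 's config \<Rightarrow> nat \<Rightarrow> real" where
  "expected_step_time \<phi> R Q c t = (\<Sum>as\<in>{as. set as \<subseteq> R \<and> length as = t}.
      if not_stopped R Q c as t then path_prob \<phi> R c as * (1 / tot_propensity \<phi> R (cfg_at c as t)) else 0)"

lemma expected_step_time_nonneg: "0 < \<phi> \<Longrightarrow> 0 \<le> expected_step_time \<phi> R Q c t"
  unfolding expected_step_time_def
  by (auto intro!: sum_nonneg divide_nonneg_nonneg path_prob_nonneg tot_propensity_nonneg)

lemma TC_eq_suminf_expected_step_time:
  assumes "0 < \<phi>" shows "TC \<phi> R Q c = (\<Sum>t. ennreal (expected_step_time \<phi> R Q c t))"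
proof -
  have "ennreal (path_prob \<phi> R c as) * ennreal (1 / tot_propensity \<phi> R (cfg_at c as t))
      = ennreal (path_prob \<phi> R c as * (1 / tot_propensity \<phi> R (cfg_at c as t)))" for as t
    using assms by (subst ennreal_mult'') (simp_all add: tot_propensity_nonneg)
  then have "(\<Sum>as\<in>{as. set as \<subseteq> R \<and> length as = t}. if not_stopped R Q c as t
          then ennreal (path_prob \<phi> R c as) * ennreal (1 / tot_propensity \<phi> R (cfg_at c as t)) else 0)
      = ennreal (expected_step_time \<phi> R Q c t)" for t
    unfolding expected_step_time_def using assms
    by (subst sum_ennreal[symmetric])
      (auto intro!: sum.cong divide_nonneg_nonneg path_prob_nonneg tot_propensity_nonneg)
  then show ?thesis unfolding TC_def by simp
qed

lemma sum_path_prob_snoc_avoiding: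
  assumes "finite R" "0 < \<phi>" "\<delta> \<in> R" "0 < tot_propensity \<phi> R (cfg_at c as (length as))"
  shows "(\<Sum>\<beta>\<in>R. if not_stopped R {\<delta>} c (as @ [\<beta>]) (Suc (length as))
            then path_prob \<phi> R c (as @ [\<beta>]) else 0)
         \<le> path_prob \<phi> R c as - path_prob \<phi> R c as *
            (propensity \<phi> R (cfg_at c as (length as)) \<delta> / tot_propensity \<phi> R (cfg_at c as (length as)))"
proof -
  define x where "x = cfg_at c as (length as)"
  define a where "a \<beta> = path_prob \<phi> R c as * (propensity \<phi> R x \<beta> / tot_propensity \<phi> R x)" for \<beta>
  have "(\<Sum>\<beta>\<in>R. if not_stopped R {\<delta>} c (as @ [\<beta>]) (Suc (length as))
            then path_prob \<phi> R c (as @ [\<beta>]) else 0) \<le> (\<Sum>\<beta>\<in>R. if \<beta> \<noteq> \<delta> then a \<beta> else 0)"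
    using not_stopped_snocD(2)[of R "{\<delta>}" c as] assms(2)
    by (intro sum_mono) (auto simp: a_def path_prob_snoc x_def
        intro!: mult_nonneg_nonneg divide_nonneg_nonneg path_prob_nonneg propensity_nonneg
          tot_propensity_nonneg)
  also have "\<dots> = (\<Sum>\<beta>\<in>R - {\<delta>}. a \<beta>)"
    using assms(1) by (simp add: sum.inter_filter[symmetric] set_diff_eq)
  also have "\<dots> = (\<Sum>\<beta>\<in>R. a \<beta>) - a \<delta>"
    using assms(1,3) by (simp add: sum_diff1)
  also have "(\<Sum>\<beta>\<in>R. a \<beta>) = path_prob \<phi> R c as"
    using assms(4) by (simp add: a_def x_def tot_propensity_def sum_distrib_left[symmetric]
        sum_divide_distrib[symmetric])
  finally show ?thesis by (simp add: a_def x_def)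
qed

text \<open>After a surviving prefix, the next step stops with probability at least
  \<open>min_propensity / \<pi>\<close>: it stops anyway if \<open>Q = {}\<close>, and otherwise whenever it fires the reaction
  of \<open>Q\<close>, which is still applicable.\<close>

lemma survival_prob_prefix_step:
  assumes crn: "crn R" and \<phi>: "0 < \<phi>" and "0 < csize c" and "set as \<subseteq> R"
    and Q: "Q = {} \<or> (\<exists>\<delta>\<in>app R c. Q = {\<delta>})"
  shows "(\<Sum>\<beta>\<in>R. if not_stopped R Q c (as @ [\<beta>]) (Suc (length as))
            then path_prob \<phi> R c (as @ [\<beta>]) else 0)
         + min_propensity \<phi> R * (if not_stopped R Q c as (length as)
            then path_prob \<phi> R c as * (1 / tot_propensity \<phi> R (cfg_at c as (length as))) else 0)
       \<le> (if not_stopped R Q c as (length as) then path_prob \<phi> R c as else 0)"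
proof (cases "not_stopped R Q c as (length as)")
  case False
  then have "\<not> not_stopped R Q c (as @ [\<beta>]) (Suc (length as))" for \<beta>
    using not_stopped_snocD(1) by blast
  with False show ?thesis by simp
next
  case True
  define x where "x = cfg_at c as (length as)"
  define p where "p = path_prob \<phi> R c as"
  define \<pi> where "\<pi> = tot_propensity \<phi> R x"
  define m where "m = min_propensity \<phi> R"
  define p_next where "p_next = (\<Sum>\<beta>\<in>R. if not_stopped R Q c (as @ [\<beta>]) (Suc (length as))
    then path_prob \<phi> R c (as @ [\<beta>]) else 0)"
  have p: "0 \<le> p" unfolding p_def using \<phi> by (rule path_prob_nonneg)
  have m: "0 < m" "m \<le> \<pi>" unfolding m_def \<pi>_def x_def
    using min_propensity_pos[OF crn \<phi>]
      tot_propensity_ge_min_propensity[OF crn \<phi> csize_cfg_at_pos[OF crn \<open>set as \<subseteq> R\<close> \<open>0 < csize c\<close>]]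
    by auto
  have rearrange: "m * (p * (1 / \<pi>)) = p * (m / \<pi>)" by simp
  from Q have "p_next + m * (p * (1 / \<pi>)) \<le> p"
  proof
    assume "Q = {}"
    then have "\<not> not_stopped R Q c (as @ [\<beta>]) (Suc (length as))" for \<beta>
      using not_stopped_empty by blast
    then have "p_next = 0" by (simp add: p_next_def)
    moreover have "p * (m / \<pi>) \<le> p" using p m by (intro mult_left_le) auto
    ultimately show ?thesis using rearrange by linarith
  next
    assume "\<exists>\<delta>\<in>app R c. Q = {\<delta>}"
    then obtain \<delta> where "\<delta> \<in> app R c" and Q: "Q = {\<delta>}" by blast
    then have "\<delta> \<in> app R x" unfolding x_def using not_stopped_singleton_app True by blast
    then have "\<delta> \<in> R" and "m \<le> propensity \<phi> R x \<delta>"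
      unfolding m_def using propensity_ge_min_propensity[OF crn \<phi>] by (auto simp: app_def)
    then have "p * (m / \<pi>) \<le> p * (propensity \<phi> R x \<delta> / \<pi>)"
      using p m by (intro mult_left_mono divide_right_mono) auto
    moreover have "p_next \<le> p - p * (propensity \<phi> R x \<delta> / \<pi>)"
      unfolding p_next_def p_def \<pi>_def x_def Q using crn_finite[OF crn] \<phi> \<open>\<delta> \<in> R\<close> m
      by (intro sum_path_prob_snoc_avoiding) (auto simp: \<pi>_def x_def)
    ultimately show ?thesis using rearrange by linarith
  qed
  with True show ?thesis unfolding p_next_def m_def p_def \<pi>_def x_def by simp
qed

lemma survival_prob_0: "survival_prob \<phi> R Q c 0 = 1"
proof -
  have "{as. set as \<subseteq> R \<and> length as = 0} = {[]}" by auto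
  then show ?thesis by (simp add: survival_prob_def)
qed

lemma survival_prob_nonneg: "0 < \<phi> \<Longrightarrow> 0 \<le> survival_prob \<phi> R Q c t"
  unfolding survival_prob_def by (auto intro!: sum_nonneg path_prob_nonneg)

lemma survival_prob_step:
  assumes "crn R" "0 < \<phi>" "0 < csize c" "Q = {} \<or> (\<exists>\<delta>\<in>app R c. Q = {\<delta>})"
  shows "survival_prob \<phi> R Q c (Suc t) + min_propensity \<phi> R * expected_step_time \<phi> R Q c t
           \<le> survival_prob \<phi> R Q c t"
proof -
  have "survival_prob \<phi> R Q c (Suc t) + min_propensity \<phi> R * expected_step_time \<phi> R Q c t
      = (\<Sum>as\<in>{as. set as \<subseteq> R \<and> length as = t}.
          (\<Sum>\<beta>\<in>R. if not_stopped R Q c (as @ [\<beta>]) (Suc t) then path_prob \<phi> R c (as @ [\<beta>]) else 0)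
          + min_propensity \<phi> R * (if not_stopped R Q c as t
              then path_prob \<phi> R c as * (1 / tot_propensity \<phi> R (cfg_at c as t)) else 0))"
    unfolding survival_prob_def expected_step_time_def sum_lists_length_Suc
    by (simp add: sum.distrib sum_distrib_left)
  also have "\<dots> \<le> survival_prob \<phi> R Q c t"
    unfolding survival_prob_def
  proof (rule sum_mono)
    fix as assume "as \<in> {as. set as \<subseteq> R \<and> length as = t}"
    then have "set as \<subseteq> R" and t: "t = length as" by auto
    show "(\<Sum>\<beta>\<in>R. if not_stopped R Q c (as @ [\<beta>]) (Suc t) then path_prob \<phi> R c (as @ [\<beta>]) else 0)
          + min_propensity \<phi> R * (if not_stopped R Q c as t
              then path_prob \<phi> R c as * (1 / tot_propensity \<phi> R (cfg_at c as t)) else 0)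
        \<le> (if not_stopped R Q c as t then path_prob \<phi> R c as else 0)"
      unfolding t by (rule survival_prob_prefix_step[OF assms(1-3) \<open>set as \<subseteq> R\<close> assms(4)])
  qed
  finally show ?thesis .
qed

lemma TC_le_inverse_min_propensity:
  assumes "crn R" "0 < \<phi>" "0 < csize c" "Q = {} \<or> (\<exists>\<delta>\<in>app R c. Q = {\<delta>})"
  shows "TC \<phi> R Q c \<le> ennreal (1 / min_propensity \<phi> R)"
proof -
  define m where "m = min_propensity \<phi> R"
  have m: "0 < m" unfolding m_def using assms(1,2) by (rule min_propensity_pos)
  have telescope: "(\<Sum>t<N. m * expected_step_time \<phi> R Q c t) \<le> 1 - survival_prob \<phi> R Q c N" for N
  proof (induction N)
    case 0
    then show ?case by (simp add: survival_prob_0)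
  next
    case (Suc N)
    then show ?case using survival_prob_step[OF assms, of N] by (simp add: m_def)
  qed
  have partial_sums: "(\<Sum>t<N. expected_step_time \<phi> R Q c t) \<le> 1 / m" for N
  proof -
    have "m * (\<Sum>t<N. expected_step_time \<phi> R Q c t) \<le> 1"
      using telescope[of N] survival_prob_nonneg[OF assms(2), of R Q c N]
      by (simp add: sum_distrib_left)
    then show ?thesis using m by (simp add: field_simps)
  qed
  have "TC \<phi> R Q c = (SUP N. \<Sum>t<N. ennreal (expected_step_time \<phi> R Q c t))"
    unfolding TC_eq_suminf_expected_step_time[OF assms(2)] by (rule suminf_eq_SUP)
  also have "\<dots> \<le> ennreal (1 / m)"
  proof (rule SUP_least)
    fix N
    have "(\<Sum>t<N. ennreal (expected_step_time \<phi> R Q c t)) = ennreal (\<Sum>t<N. expected_step_time \<phi> R Q c t)"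
      using assms(2) by (intro sum_ennreal expected_step_time_nonneg)
    then show "(\<Sum>t<N. ennreal (expected_step_time \<phi> R Q c t)) \<le> ennreal (1 / m)"
      using partial_sums by (simp add: ennreal_leI)
  qed
  finally show ?thesis by (simp add: m_def)
qed

section \<open>Walks and escape reactions\<close>

lemma reach_refl [simp]: "reach R c c"
  by (simp add: reach_def)

lemma reach_trans: "reach R x y \<Longrightarrow> reach R y z \<Longrightarrow> reach R x z"
  unfolding reach_def by (rule rtranclp_trans)

lemma reach_apply_r: "\<beta> \<in> app R c \<Longrightarrow> reach R c (apply_r \<beta> c)"
  unfolding reach_def step_def by (rule r_into_rtranclp) blast

lemma execution_reach:
  assumes "execution R c \<alpha>" "t \<le> t'" shows "reach R (c t) (c t')"
  using assms(2)
proof (induction t' rule: dec_induct)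
  case (step n)
  then show ?case
    using assms(1) reach_apply_r reach_trans unfolding execution_def by metis
qed simp

lemma execution_csize_pos:
  assumes "crn R" "execution R c \<alpha>" "0 < csize (c 0)"
  shows "0 < csize (c t)"
proof (cases t)
  case (Suc t')
  then have "\<alpha> t' \<in> R" "c t = apply_r (\<alpha> t') (c t')"
    using assms(2) unfolding execution_def app_def by auto
  then show ?thesis using csize_apply_r_pos[OF assms(1)] by simp
qed (use assms(3) in simp)

fun walk :: "'s reaction set \<Rightarrow> 's config \<Rightarrow> 's reaction list \<Rightarrow> 's config \<Rightarrow> bool" where
  "walk R x [] y \<longleftrightarrow> x = y"
| "walk R x (\<beta> # as) y \<longleftrightarrow> \<beta> \<in> app R x \<and> walk R (apply_r \<beta> x) as y"

lemma walk_append: "walk R x (as @ bs) z \<longleftrightarrow> (\<exists>y. walk R x as y \<and> walk R y bs z)"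
  by (induction as arbitrary: x) auto

lemma walk_fold: "walk R x as y \<Longrightarrow> fold apply_r as x = y"
  by (induction as arbitrary: x) auto

lemma reach_iff_walk: "reach R x y \<longleftrightarrow> (\<exists>as. walk R x as y)"
proof
  assume "reach R x y"
  then show "\<exists>as. walk R x as y"
    unfolding reach_def
  proof (induction rule: rtranclp_induct)
    case base
    have "walk R x [] x" by simp
    then show ?case ..
  next
    case (step y z)
    then obtain as \<beta> where "walk R x as y" "\<beta> \<in> app R y" "z = apply_r \<beta> y"
      unfolding step_def by blast
    then have "walk R x (as @ [\<beta>]) z" by (auto simp: walk_append)
    then show ?case ..
  qed
next
  assume "\<exists>as. walk R x as y"
  then obtain as where "walk R x as y" ..
  then show "reach R x y"
    by (induction as arbitrary: x) (auto intro: reach_trans reach_apply_r)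
qed

lemma walk_drop:
  assumes "walk R x as y" "i \<le> length as"
  shows "walk R (cfg_at x as i) (drop i as) y"
proof -
  obtain z where "walk R x (take i as) z" "walk R z (drop i as) y"
    using assms(1) walk_append[of R x "take i as" "drop i as" y] by auto
  moreover have "z = cfg_at x as i"
    using walk_fold[OF calculation(1)] by (simp add: cfg_at_def)
  ultimately show ?thesis by simp
qed

lemma walk_cfg_at_length: "walk R x as y \<Longrightarrow> cfg_at x as (length as) = y"
  using walk_drop[of R x as y "length as"] by simp

lemma walk_app_cfg_at:
  assumes "walk R x as y" "i < length as"
  shows "as ! i \<in> app R (cfg_at x as i)"
  using walk_drop[OF assms(1), of i] assms(2) by (simp add: Cons_nth_drop_Suc[symmetric])

lemma walk_reach_cfg_at: "walk R x as y \<Longrightarrow> i \<le> length as \<Longrightarrow> reach R (cfg_at x as i) y"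
  using walk_drop reach_iff_walk by blast

lemma closed_walk_concat:
  assumes "\<forall>w\<in>set ws. walk R x w x"
  shows "walk R x (concat ws) x"
  using assms by (induction ws) (auto simp: walk_append)

lemma closed_walk_concat_split:
  assumes "\<forall>w\<in>set ws. walk R x w x" "w \<in> set ws"
  obtains pre post where "concat ws = pre @ w @ post" "walk R x pre x"
proof -
  obtain us vs where "ws = us @ w # vs" using split_list[OF assms(2)] by blast
  with assms(1) show ?thesis
    by (intro that[of "concat us" "concat vs"]) (auto intro: closed_walk_concat)
qed

lemma cfg_at_after_closed_walk:
  assumes "walk R x pre x" "i \<le> length w"
  shows "cfg_at x (pre @ w @ post) (length pre + i) = cfg_at x w i"
  using walk_fold[OF assms(1)] assms(2) by (simp add: cfg_at_def)

lemma apply_r_void: "fst \<beta> = snd \<beta> \<Longrightarrow> fst \<beta> \<le> c \<Longrightarrow> apply_r \<beta> c = c"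
  unfolding apply_r_def by (auto simp: le_fun_def)

definition scc :: "'s reaction set \<Rightarrow> 's config \<Rightarrow> 's config set" where
  "scc R x = {y. reach R x y \<and> reach R y x}"

definition escape_reaction :: "'s reaction set \<Rightarrow> 's config \<Rightarrow> 's reaction \<Rightarrow> bool" where
  "escape_reaction R x \<delta> \<longleftrightarrow> \<delta> \<in> NV R \<and> (\<forall>y\<in>scc R x. \<delta> \<in> app R y \<and> apply_r \<delta> y \<notin> scc R x)"

lemma scc_self [simp]: "x \<in> scc R x"
  by (simp add: scc_def)

lemma finite_scc:
  assumes "crn R" "0 < csize x" shows "finite (scc R x)"
proof -
  obtain K where "\<forall>c c'. 0 < csize c \<longrightarrow> reach R c c' \<longrightarrow> csize c' \<le> K * csize c"
    using crn_finite_density[OF assms(1)] by blast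
  then have "scc R x \<subseteq> {y. csize y \<le> K * csize x}"
    using assms(2) by (auto simp: scc_def)
  then show ?thesis using finite_csize_le by (rule finite_subset)
qed

lemma closed_walk_concat_visits:
  assumes "\<forall>w\<in>set ws. walk R x w x" "u @ v \<in> set ws" "walk R x u y"
  shows "\<exists>p\<le>length (concat ws). cfg_at x (concat ws) p = y"
proof -
  obtain pre post where W: "concat ws = pre @ (u @ v) @ post" "walk R x pre x"
    using assms(1,2) by (rule closed_walk_concat_split)
  have "cfg_at x (concat ws) (length pre + length u) = cfg_at x (u @ v) (length u)"
    unfolding W(1) using W(2) by (rule cfg_at_after_closed_walk) simp
  also have "\<dots> = y" using walk_cfg_at_length[OF assms(3)] by (simp add: cfg_at_append)
  finally show ?thesis unfolding W(1) by (intro exI[of _ "length pre + length u"]) simp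
qed

lemma closed_walk_concat_fires:
  assumes "\<forall>w\<in>set ws. walk R x w x" "u @ \<beta> # v \<in> set ws"
  shows "\<exists>p<length (concat ws). concat ws ! p = \<beta>"
proof -
  obtain pre post where "concat ws = pre @ (u @ \<beta> # v) @ post"
    using assms by (rule closed_walk_concat_split)
  then show ?thesis by (intro exI[of _ "length pre + length u"]) (simp add: nth_append)
qed

lemma exists_closed_walk_covering:
  assumes "finite S" "S \<subseteq> scc R x" "finite T"
    and T: "\<forall>(y, \<beta>)\<in>T. y \<in> scc R x \<and> \<beta> \<in> app R y \<and> apply_r \<beta> y \<in> scc R x"
  obtains W where "walk R x W x"
    and "\<forall>y\<in>S. \<exists>p\<le>length W. cfg_at x W p = y"
    and "\<forall>(y, \<beta>)\<in>T. \<exists>p<length W. W ! p = \<beta>"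
proof -
  have "\<forall>y\<in>scc R x. \<exists>as. walk R x as y" "\<forall>y\<in>scc R x. \<exists>as. walk R y as x"
    unfolding scc_def reach_iff_walk by auto
  then obtain there home where there: "\<forall>y\<in>scc R x. walk R x (there y) y"
    and home: "\<forall>y\<in>scc R x. walk R y (home y) x" by metis
  obtain SL TL where SL: "set SL = S" and TL: "set TL = T" using finite_list assms(1,3) by metis
  define ws where "ws = map (\<lambda>y. there y @ home y) SL
    @ map (\<lambda>(y, \<beta>). there y @ \<beta> # home (apply_r \<beta> y)) TL"
  have "walk R x (there y @ home y) x" if "y \<in> S" for y
    using that assms(2) there home by (auto simp: walk_append)
  moreover have "walk R x (there y @ \<beta> # home (apply_r \<beta> y)) x" if "(y, \<beta>) \<in> T" for y \<beta>
  proof -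
    from that T have "y \<in> scc R x" "\<beta> \<in> app R y" "apply_r \<beta> y \<in> scc R x" by auto
    with there home show ?thesis by (auto simp: walk_append)
  qed
  ultimately have closed: "\<forall>w\<in>set ws. walk R x w x" using SL TL by (auto simp: ws_def)
  show thesis
  proof (rule that[of "concat ws"])
    show "walk R x (concat ws) x" using closed by (rule closed_walk_concat)
    show "\<forall>y\<in>S. \<exists>p\<le>length (concat ws). cfg_at x (concat ws) p = y"
    proof
      fix y assume "y \<in> S"
      then have "there y @ home y \<in> set ws" "walk R x (there y) y"
        using SL there assms(2) by (auto simp: ws_def)
      then show "\<exists>p\<le>length (concat ws). cfg_at x (concat ws) p = y"
        by (rule closed_walk_concat_visits[OF closed])
    qed
    show "\<forall>(y, \<beta>)\<in>T. \<exists>p<length (concat ws). concat ws ! p = \<beta>"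
    proof (clarify)
      fix y \<beta> assume "(y, \<beta>) \<in> T"
      then have "there y @ \<beta> # home (apply_r \<beta> y) \<in> set ws" using TL by (force simp: ws_def)
      then show "\<exists>p<length (concat ws). concat ws ! p = \<beta>"
        by (rule closed_walk_concat_fires[OF closed])
    qed
  qed
qed

text \<open>A reaction applicable at \<open>x\<close> either stays in the SCC, or it is an escape reaction, or
  it is inapplicable at some other member \<open>y\<close> of the SCC; then the first step of a path from \<open>x\<close>
  to \<open>y\<close> stays in the SCC.\<close>

lemma scc_transition_exists:
  assumes "crn R" "0 < csize x" "\<not> (\<exists>\<delta>. escape_reaction R x \<delta>)"
  obtains y \<beta> where "y \<in> scc R x" "\<beta> \<in> app R y" "apply_r \<beta> y \<in> scc R x"
proof -
  obtain \<beta> where \<beta>: "\<beta> \<in> app R x" using crn_app_nonempty[OF assms(1,2)] by blast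
  show thesis
  proof (cases "apply_r \<beta> x \<in> scc R x")
    case True
    with \<beta> show thesis by (intro that[of x \<beta>]) simp_all
  next
    case False
    then have "fst \<beta> \<noteq> snd \<beta>" using \<beta> apply_r_void[of \<beta> x] by (auto simp: app_def)
    then have "\<beta> \<in> NV R" using \<beta> by (simp add: NV_def app_def)
    then obtain y where y: "y \<in> scc R x" "\<beta> \<in> app R y \<Longrightarrow> apply_r \<beta> y \<in> scc R x"
      using assms(3) unfolding escape_reaction_def by blast
    show thesis
    proof (cases "\<beta> \<in> app R y")
      case True
      then show thesis using y by (intro that[of y \<beta>]) auto
    next
      case False
      then have "y \<noteq> x" using \<beta> by auto
      moreover have "(step R)\<^sup>*\<^sup>* x y" "reach R y x" using y(1) by (auto simp: scc_def reach_def)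
      ultimately obtain x1 where "step R x x1" "reach R x1 y"
        unfolding reach_def by (metis converse_rtranclpE)
      then obtain \<gamma> where "\<gamma> \<in> app R x" "x1 = apply_r \<gamma> x" "reach R x1 x"
        using \<open>reach R y x\<close> reach_trans unfolding step_def by blast
      then show thesis using reach_apply_r[of \<gamma> R x] by (intro that[of x \<gamma>]) (auto simp: scc_def)
    qed
  qed
qed

lemma closed_walk_cfg_at_wrap:
  assumes "walk R x W x" "W \<noteq> []" "p \<le> length W"
  shows "\<exists>q<length W. cfg_at x W q = cfg_at x W p"
proof (cases "p = length W")
  case True
  then have "cfg_at x W 0 = cfg_at x W p" using walk_cfg_at_length[OF assms(1)] by simp
  with assms(2) show ?thesis by blast
next
  case False
  with assms(3) show ?thesis by (intro exI[of _ p]) simp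
qed

lemma no_escape_reaction_stays_in_scc:
  assumes "\<not> (\<exists>\<delta>. escape_reaction R x \<delta>)" "\<beta> \<in> R" "\<forall>y\<in>scc R x. \<beta> \<in> app R y"
  obtains y where "y \<in> scc R x" "apply_r \<beta> y \<in> scc R x"
proof (cases "fst \<beta> = snd \<beta>")
  case True
  then have "apply_r \<beta> x = x" using assms(3) apply_r_void[of \<beta> x] by (simp add: app_def)
  then show thesis by (intro that[of x]) simp_all
next
  case False
  then have "\<beta> \<in> NV R" using assms(2) by (simp add: NV_def)
  with assms(1,3) obtain y where "y \<in> scc R x" "apply_r \<beta> y \<in> scc R x"
    unfolding escape_reaction_def by blast
  then show thesis by (rule that)
qed

lemma fair_closed_walk:
  assumes "crn R" "0 < csize x" "\<not> (\<exists>\<delta>. escape_reaction R x \<delta>)"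
  obtains W where "walk R x W x" "W \<noteq> []"
    and "\<forall>\<beta>\<in>R. \<exists>p<length W. W ! p = \<beta> \<or> \<beta> \<notin> app R (cfg_at x W p)"
proof -
  define T where "T = {(y, \<beta>). y \<in> scc R x \<and> \<beta> \<in> app R y \<and> apply_r \<beta> y \<in> scc R x}"
  have "T \<subseteq> scc R x \<times> R" by (auto simp: T_def app_def)
  then have "finite T"
    using finite_scc[OF assms(1,2)] crn_finite[OF assms(1)] by (simp add: finite_subset)
  obtain W where W: "walk R x W x"
    and visits: "\<forall>y\<in>scc R x. \<exists>p\<le>length W. cfg_at x W p = y"
    and fires: "\<forall>(y, \<beta>)\<in>T. \<exists>p<length W. W ! p = \<beta>"
    by (rule exists_closed_walk_covering[of "scc R x" R x T])
      (use finite_scc[OF assms(1,2)] \<open>finite T\<close> in \<open>auto simp: T_def\<close>)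
  obtain y \<beta> where "y \<in> scc R x" "\<beta> \<in> app R y" "apply_r \<beta> y \<in> scc R x"
    by (rule scc_transition_exists[OF assms])
  then have "(y, \<beta>) \<in> T" by (simp add: T_def)
  with fires have "\<exists>p<length W. W ! p = \<beta>" by (auto dest: bspec)
  then have "W \<noteq> []" by (cases W) simp_all
  have "\<exists>p<length W. W ! p = \<beta> \<or> \<beta> \<notin> app R (cfg_at x W p)" if "\<beta> \<in> R" for \<beta>
  proof (cases "\<forall>y\<in>scc R x. \<beta> \<in> app R y")
    case False
    then obtain y where "y \<in> scc R x" "\<beta> \<notin> app R y" by blast
    moreover from visits \<open>y \<in> scc R x\<close> obtain p where "p \<le> length W" "cfg_at x W p = y" by blast
    ultimately show ?thesis using closed_walk_cfg_at_wrap[OF W \<open>W \<noteq> []\<close>] by metis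
  next
    case True
    with assms(3) that obtain y where "y \<in> scc R x" "apply_r \<beta> y \<in> scc R x"
      by (rule no_escape_reaction_stays_in_scc)
    with True have "(y, \<beta>) \<in> T" by (simp add: T_def)
    with fires have "\<exists>p<length W. W ! p = \<beta>" by (auto dest: bspec)
    then show ?thesis by blast
  qed
  with W \<open>W \<noteq> []\<close> show thesis by (intro that) auto
qed

lemma periodic_execution:
  assumes "walk R x W x" "W \<noteq> []"
  shows "execution R (\<lambda>t. cfg_at x W (t mod length W)) (\<lambda>t. W ! (t mod length W))"
  unfolding execution_def
proof
  fix t
  define k where "k = t mod length W"
  have k: "k < length W" using assms(2) by (simp add: k_def)
  have "cfg_at x W (Suc t mod length W) = cfg_at x W (Suc k)"
  proof (cases "Suc k = length W")
    case True
    then have "cfg_at x W (Suc k) = x" using walk_cfg_at_length[OF assms(1)] by simp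
    with True show ?thesis by (simp add: k_def mod_Suc)
  qed (simp add: k_def mod_Suc)
  then show "W ! (t mod length W) \<in> app R (cfg_at x W (t mod length W)) \<and>
      cfg_at x W (Suc t mod length W) = apply_r (W ! (t mod length W)) (cfg_at x W (t mod length W))"
    using walk_app_cfg_at[OF assms(1) k] cfg_at_Suc[OF k] by (simp add: k_def)
qed

lemma execution_append:
  assumes "execution R c \<alpha>" "execution R d \<beta>" "d 0 = c T"
  shows "execution R (\<lambda>t. if t \<le> T then c t else d (t - T)) (\<lambda>t. if t < T then \<alpha> t else \<beta> (t - T))"
  unfolding execution_def
proof
  fix t
  show "(if t < T then \<alpha> t else \<beta> (t - T)) \<in> app R (if t \<le> T then c t else d (t - T)) \<and>
      (if Suc t \<le> T then c (Suc t) else d (Suc t - T)) =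
      apply_r (if t < T then \<alpha> t else \<beta> (t - T)) (if t \<le> T then c t else d (t - T))"
  proof (cases "t < T")
    case True
    then show ?thesis using assms(1) by (simp add: execution_def)
  next
    case False
    then have "(if t \<le> T then c t else d (t - T)) = d (t - T)" using assms(3) by auto
    moreover have "Suc t - T = Suc (t - T)" using False by simp
    ultimately show ?thesis using False assms(2) by (simp add: execution_def)
  qed
qed

lemma cycling_execution:
  assumes exec: "execution R c \<alpha>" and W: "walk R (c T) W (c T)" "W \<noteq> []"
    and fair: "\<forall>\<beta>\<in>R. \<exists>p<length W. W ! p = \<beta> \<or> \<beta> \<notin> app R (cfg_at (c T) W p)"
  obtains d \<beta> where "execution R d \<beta>" "weakly_fair R d \<beta>" "d 0 = c 0" "\<forall>t. reach R (d t) (c T)"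
proof -
  define L where "L = length W"
  define d where "d t = (if t \<le> T then c t else cfg_at (c T) W ((t - T) mod L))" for t
  define \<beta> where "\<beta> t = (if t < T then \<alpha> t else W ! ((t - T) mod L))" for t
  have d_after: "d t = cfg_at (c T) W ((t - T) mod L)" "\<beta> t = W ! ((t - T) mod L)" if "T \<le> t" for t
    using that by (auto simp: d_def \<beta>_def)
  have "execution R d \<beta>"
    unfolding d_def \<beta>_def L_def by (rule execution_append[OF exec periodic_execution[OF W]]) simp
  moreover have "weakly_fair R d \<beta>"
    unfolding weakly_fair_def
  proof (intro allI ballI)
    fix t \<gamma> assume "\<gamma> \<in> app R (d t)"
    then obtain p where p: "p < L" "W ! p = \<gamma> \<or> \<gamma> \<notin> app R (cfg_at (c T) W p)"
      using fair by (auto simp: app_def L_def)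
    have "1 \<le> L" using W(2) by (simp add: L_def Suc_le_eq)
    then have "t \<le> L * t" using mult_le_mono1[of 1 L t] by simp
    then have "t \<le> T + L * t + p" "T \<le> T + L * t + p" by linarith+
    moreover have "(T + L * t + p - T) mod L = p" using p(1) by simp
    ultimately show "\<exists>t'\<ge>t. \<beta> t' = \<gamma> \<or> \<gamma> \<notin> app R (d t')"
      using p(2) d_after by metis
  qed
  moreover have "d 0 = c 0" by (simp add: d_def)
  moreover have "\<forall>t. reach R (d t) (c T)"
  proof
    fix t
    show "reach R (d t) (c T)"
    proof (cases "t \<le> T")
      case True
      then show ?thesis using execution_reach[OF exec] by (simp add: d_def)
    next
      case False
      have "(t - T) mod L \<le> length W" using W(2) by (simp add: L_def less_imp_le)
      with False show ?thesis using walk_reach_cfg_at[OF W(1)] by (simp add: d_def)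
    qed
  qed
  ultimately show thesis by (rule that)
qed

lemma escape_reaction_exists:
  fixes G :: "'s::finite config set"
  assumes crn: "crn R"
    and closed: "\<And>y z. y \<in> G \<Longrightarrow> reach R y z \<Longrightarrow> z \<in> G"
    and correct: "\<And>d \<beta>. execution R d \<beta> \<Longrightarrow> weakly_fair R d \<beta> \<Longrightarrow> d 0 = c 0 \<Longrightarrow> \<exists>t. d t \<in> G"
    and exec: "execution R c \<alpha>" and "0 < csize (c T)" and "c T \<notin> G"
  shows "\<exists>\<delta>. escape_reaction R (c T) \<delta>"
proof (rule ccontr)
  assume "\<not> (\<exists>\<delta>. escape_reaction R (c T) \<delta>)"
  with crn \<open>0 < csize (c T)\<close> obtain W where "walk R (c T) W (c T)" "W \<noteq> []"
    and "\<forall>\<beta>\<in>R. \<exists>p<length W. W ! p = \<beta> \<or> \<beta> \<notin> app R (cfg_at (c T) W p)"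
    by (rule fair_closed_walk)
  with exec obtain d \<beta> where "execution R d \<beta>" "weakly_fair R d \<beta>" "d 0 = c 0"
    and reach: "\<forall>t. reach R (d t) (c T)"
    by (rule cycling_execution)
  then obtain t where "d t \<in> G" using correct by blast
  then have "c T \<in> G" using closed reach by blast
  with \<open>c T \<notin> G\<close> show False ..
qed

definition escape_policy :: "'s reaction set \<Rightarrow> 's config \<Rightarrow> 's reaction set" where
  "escape_policy R x = (if \<exists>\<delta>. escape_reaction R x \<delta> then {SOME \<delta>. escape_reaction R x \<delta>} else {})"

lemma escape_policy_escape_reaction:
  assumes "\<exists>\<delta>. escape_reaction R x \<delta>"
  obtains \<delta> where "escape_policy R x = {\<delta>}" "escape_reaction R x \<delta>"
  using assms someI_ex[of "escape_reaction R x"] by (simp add: escape_policy_def)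

lemma escape_policy_cases: "escape_policy R x = {} \<or> (\<exists>\<delta>\<in>app R x. escape_policy R x = {\<delta>})"
proof (cases "\<exists>\<delta>. escape_reaction R x \<delta>")
  case True
  then obtain \<delta> where "escape_policy R x = {\<delta>}" "escape_reaction R x \<delta>"
    by (rule escape_policy_escape_reaction)
  then show ?thesis using scc_self[of x R] by (auto simp: escape_reaction_def)
qed (simp add: escape_policy_def)

lemma runtime_policy_escape_policy: "runtime_policy R (escape_policy R)"
  unfolding runtime_policy_def
proof
  fix x
  show "escape_policy R x \<subseteq> NV R"
  proof (cases "\<exists>\<delta>. escape_reaction R x \<delta>")
    case True
    then obtain \<delta> where "escape_policy R x = {\<delta>}" "escape_reaction R x \<delta>"
      by (rule escape_policy_escape_reaction)
    then show ?thesis by (simp add: escape_reaction_def)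
  qed (simp add: escape_policy_def)
qed

section \<open>Rounds before stabilization\<close>

lemma tau_spec:
  assumes "weakly_fair R c \<alpha>" "finite Q" "Q \<subseteq> R"
  shows "t < tau R c \<alpha> t Q \<and>
    (\<alpha> (tau R c \<alpha> t Q - 1) \<in> Q \<or> Q \<subseteq> (\<Union>t'\<in>{t..tau R c \<alpha> t Q}. nonapp R (c t')))"
  unfolding tau_def
proof (rule LeastI_ex)
  have "\<forall>\<delta>\<in>Q. \<exists>t'\<ge>t. \<alpha> t' = \<delta> \<or> \<delta> \<notin> app R (c t')"
    using assms(1) unfolding weakly_fair_def by (metis order_refl)
  then obtain f where f: "\<forall>\<delta>\<in>Q. t \<le> f \<delta> \<and> (\<alpha> (f \<delta>) = \<delta> \<or> \<delta> \<notin> app R (c (f \<delta>)))"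
    by metis
  show "\<exists>s. t < s \<and> (\<alpha> (s - 1) \<in> Q \<or> Q \<subseteq> (\<Union>t'\<in>{t..s}. nonapp R (c t')))"
  proof (cases "\<exists>\<delta>\<in>Q. \<alpha> (f \<delta>) = \<delta>")
    case True
    then obtain \<delta> where "\<delta> \<in> Q" "\<alpha> (f \<delta>) = \<delta>" by blast
    with f show ?thesis by (intro exI[of _ "Suc (f \<delta>)"]) auto
  next
    case False
    define s where "s = Suc (Max (insert t (f ` Q)))"
    have "f \<delta> \<le> s" if "\<delta> \<in> Q" for \<delta>
      using that assms(2) by (simp add: s_def le_SucI)
    then have "Q \<subseteq> (\<Union>t'\<in>{t..s}. nonapp R (c t'))"
      using f False assms(3) by (fastforce simp: nonapp_def)
    moreover have "t < s" using assms(2) by (simp add: s_def le_imp_less_Suc)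
    ultimately show ?thesis by blast
  qed
qed

lemma prefix_runtime_le:
  assumes "\<And>i. TC \<phi> R (\<rho> (eff_config R c \<alpha> \<rho> \<sigma> i)) (eff_config R c \<alpha> \<rho> \<sigma> i) \<le> ennreal B" "0 \<le> B"
  shows "prefix_runtime \<phi> R c \<alpha> \<rho> \<sigma> t \<le> ennreal (real (LEAST i. t \<le> round_start R c \<alpha> \<rho> \<sigma> i) * B)"
proof -
  have "prefix_runtime \<phi> R c \<alpha> \<rho> \<sigma> t
      \<le> of_nat (card {..<(LEAST i. t \<le> round_start R c \<alpha> \<rho> \<sigma> i)}) * ennreal B"
    unfolding prefix_runtime_def by (rule sum_bounded_above) (rule assms(1))
  also have "\<dots> = ennreal (real (LEAST i. t \<le> round_start R c \<alpha> \<rho> \<sigma> i) * B)"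
    using assms(2) by (simp add: ennreal_of_nat_eq_real_of_nat ennreal_mult'')
  finally show ?thesis .
qed

context
  fixes R :: "'s::finite reaction set" and G :: "'s config set"
    and c :: "nat \<Rightarrow> 's config" and \<alpha> :: "nat \<Rightarrow> 's reaction" and \<sigma> :: "nat \<Rightarrow> nat"
  assumes crn: "crn R"
    and closed: "\<And>y z. y \<in> G \<Longrightarrow> reach R y z \<Longrightarrow> z \<in> G"
    and correct: "\<And>d \<beta>. execution R d \<beta> \<Longrightarrow> weakly_fair R d \<beta> \<Longrightarrow> d 0 = c 0 \<Longrightarrow> \<exists>t. d t \<in> G"
    and exec: "execution R c \<alpha>" and fair: "weakly_fair R c \<alpha>"
    and nonempty: "0 < csize (c 0)" and skip: "skipping_policy \<sigma>"
begin

abbreviation t_round :: "nat \<Rightarrow> nat" where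
  "t_round \<equiv> round_start R c \<alpha> (escape_policy R) \<sigma>"

abbreviation e_round :: "nat \<Rightarrow> 's config" where
  "e_round \<equiv> eff_config R c \<alpha> (escape_policy R) \<sigma>"

lemma e_round_eq: "e_round i = c (\<sigma> (t_round i))"
  by (simp add: eff_config_def)

lemma round_spec:
  "\<sigma> (t_round i) < t_round (Suc i) \<and>
    (\<alpha> (t_round (Suc i) - 1) \<in> escape_policy R (e_round i) \<or>
     escape_policy R (e_round i) \<subseteq> (\<Union>t\<in>{\<sigma> (t_round i)..t_round (Suc i)}. nonapp R (c t)))"
proof -
  have "finite (escape_policy R (e_round i))" "escape_policy R (e_round i) \<subseteq> R"
    using escape_policy_cases[of R "e_round i"] by (auto simp: app_def)
  then show ?thesis using tau_spec[OF fair] by (simp add: eff_config_def)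
qed

lemma t_round_mono:
  assumes "i \<le> j" shows "t_round i \<le> t_round j"
proof -
  have step: "t_round i < t_round (Suc i)" for i
  proof -
    have "t_round i \<le> \<sigma> (t_round i)" using skip by (simp add: skipping_policy_def)
    also have "\<dots> < t_round (Suc i)" using round_spec[of i] by blast
    finally show ?thesis .
  qed
  show ?thesis by (rule lift_Suc_mono_le[of t_round, OF less_imp_le[OF step] assms])
qed

lemma round_exits_scc:
  assumes "e_round i \<notin> G"
  obtains x where "\<sigma> (t_round i) \<le> x" "x \<le> t_round (Suc i)" "c x \<notin> scc R (e_round i)"
proof -
  have "0 < csize (e_round i)" using execution_csize_pos[OF crn exec nonempty] by (simp add: e_round_eq)
  then have "\<exists>\<delta>. escape_reaction R (e_round i) \<delta>"
    using escape_reaction_exists[OF crn closed correct exec] assms by (simp add: e_round_eq)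
  then obtain \<delta> where policy: "escape_policy R (e_round i) = {\<delta>}" and "escape_reaction R (e_round i) \<delta>"
    by (rule escape_policy_escape_reaction)
  then have escape: "\<And>y. y \<in> scc R (e_round i) \<Longrightarrow> \<delta> \<in> app R y \<and> apply_r \<delta> y \<notin> scc R (e_round i)"
    by (simp add: escape_reaction_def)
  define s where "s = t_round (Suc i)"
  have s: "\<sigma> (t_round i) < s" "\<alpha> (s - 1) = \<delta> \<or> (\<exists>t'\<in>{\<sigma> (t_round i)..s}. \<delta> \<in> nonapp R (c t'))"
    using round_spec[of i] policy by (auto simp: s_def)
  show thesis
  proof (cases "\<alpha> (s - 1) = \<delta>")
    case True
    have "c (Suc (s - 1)) = apply_r (\<alpha> (s - 1)) (c (s - 1))" using exec by (simp add: execution_def)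
    moreover have "Suc (s - 1) = s" using s(1) by simp
    ultimately have fired: "c s = apply_r \<delta> (c (s - 1))" using True by simp
    show thesis
    proof (cases "c (s - 1) \<in> scc R (e_round i)")
      case True
      then have "c s \<notin> scc R (e_round i)" using escape fired by simp
      then show thesis using s(1) by (intro that[of s]) (simp_all add: s_def)
    next
      case False
      then show thesis using s(1) by (intro that[of "s - 1"]) (simp_all add: s_def)
    qed
  next
    case False
    then obtain t' where t': "t' \<in> {\<sigma> (t_round i)..s}" "\<delta> \<notin> app R (c t')"
      using s(2) by (auto simp: nonapp_def)
    then have "c t' \<notin> scc R (e_round i)" using escape by blast
    then show thesis using t'(1) by (intro that[of t']) (simp_all add: s_def)
  qed
qed

lemma round_leaves_scc:
  assumes "e_round i \<notin> G" "t_round (Suc i) \<le> t"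
  shows "c t \<notin> scc R (e_round i)"
proof
  assume t: "c t \<in> scc R (e_round i)"
  obtain x where x: "\<sigma> (t_round i) \<le> x" "x \<le> t_round (Suc i)" "c x \<notin> scc R (e_round i)"
    using round_exits_scc[OF assms(1)] .
  have "reach R (e_round i) (c x)" using execution_reach[OF exec x(1)] by (simp add: e_round_eq)
  moreover have "reach R (c x) (e_round i)"
    using execution_reach[OF exec, of x t] x(2) assms(2) t reach_trans by (auto simp: scc_def)
  ultimately show False using x(3) by (simp add: scc_def)
qed

lemma e_round_neq:
  assumes "i < j" "e_round i \<notin> G" shows "e_round j \<noteq> e_round i"
proof -
  have "t_round (Suc i) \<le> \<sigma> (t_round j)"
    using t_round_mono[of "Suc i" j] assms(1) skip by (auto simp: skipping_policy_def intro: order_trans)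
  then have "e_round j \<notin> scc R (e_round i)" using round_leaves_scc[OF assms(2)] by (simp add: e_round_eq)
  then show ?thesis by auto
qed

lemma rounds_before_goal:
  assumes K: "\<forall>c c'. 0 < csize c \<longrightarrow> reach R c c' \<longrightarrow> csize c' \<le> K * csize c"
  shows "(LEAST i. (LEAST t. c t \<in> G) \<le> t_round i) \<le> card {y :: 's config. csize y \<le> K * csize (c 0)} + 1"
proof -
  define rounds where "rounds = (LEAST i. (LEAST t. c t \<in> G) \<le> t_round i)"
  have not_goal: "e_round i \<notin> G" if "i < rounds - 1" for i
  proof -
    have "Suc i < rounds" using that by simp
    then have "\<not> (LEAST t. c t \<in> G) \<le> t_round (Suc i)"
      unfolding rounds_def by (rule not_less_Least)
    moreover have "\<sigma> (t_round i) < t_round (Suc i)" using round_spec[of i] by blast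
    ultimately have "\<sigma> (t_round i) < (LEAST t. c t \<in> G)" by linarith
    then have "c (\<sigma> (t_round i)) \<notin> G" by (rule not_less_Least)
    then show ?thesis by (simp add: e_round_eq)
  qed
  have "inj_on e_round {..<rounds - 1}"
  proof (rule inj_onI)
    fix i j assume "i \<in> {..<rounds - 1}" "j \<in> {..<rounds - 1}" "e_round i = e_round j"
    then show "i = j" using e_round_neq not_goal by (metis lessThan_iff linorder_neqE_nat)
  qed
  moreover have "e_round ` {..<rounds - 1} \<subseteq> {y. csize y \<le> K * csize (c 0)}"
  proof
    fix y assume "y \<in> e_round ` {..<rounds - 1}"
    then obtain i where "y = e_round i" by blast
    moreover have "reach R (c 0) (e_round i)"
      using execution_reach[OF exec, of 0 "\<sigma> (t_round i)"] by (simp add: e_round_eq)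
    ultimately show "y \<in> {y. csize y \<le> K * csize (c 0)}" using K nonempty by blast
  qed
  ultimately have "card {..<rounds - 1} \<le> card {y :: 's config. csize y \<le> K * csize (c 0)}"
    using finite_csize_le by (rule card_inj_on_le)
  then show ?thesis by (simp add: rounds_def)
qed


lemma runtime_before_goal_le:
  assumes "0 < \<phi>" and K: "\<forall>c c'. 0 < csize c \<longrightarrow> reach R c c' \<longrightarrow> csize c' \<le> K * csize c"
  shows "prefix_runtime \<phi> R c \<alpha> (escape_policy R) \<sigma> (LEAST t. c t \<in> G)
    \<le> ennreal ((real (card {y :: 's config. csize y \<le> K * csize (c 0)}) + 1) * (1 / min_propensity \<phi> R))"
proof -
  have m: "0 < min_propensity \<phi> R" using crn assms(1) by (rule min_propensity_pos)
  have "TC \<phi> R (escape_policy R (e_round i)) (e_round i) \<le> ennreal (1 / min_propensity \<phi> R)" for i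
    using execution_csize_pos[OF crn exec nonempty]
    by (intro TC_le_inverse_min_propensity[OF crn assms(1)] escape_policy_cases) (simp add: e_round_eq)
  then have "prefix_runtime \<phi> R c \<alpha> (escape_policy R) \<sigma> (LEAST t. c t \<in> G)
      \<le> ennreal (real (LEAST i. (LEAST t. c t \<in> G) \<le> t_round i) * (1 / min_propensity \<phi> R))"
    using m by (intro prefix_runtime_le) auto
  also have "\<dots> \<le> ennreal ((real (card {y :: 's config. csize y \<le> K * csize (c 0)}) + 1) * (1 / min_propensity \<phi> R))"
    using rounds_before_goal[OF K] m by (intro ennreal_leI mult_right_mono) auto
  finally show ?thesis .
qed
end

lemma runtime_bound_for_closed_goal:
  fixes R :: "'s::finite reaction set" and goal :: "'s config \<Rightarrow> 's config set"
  assumes crn: "crn R" and vol: "\<And>n. 1 \<le> n \<Longrightarrow> 0 < vol n"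
    and closed: "\<And>c_init y z. y \<in> goal c_init \<Longrightarrow> reach R y z \<Longrightarrow> z \<in> goal c_init"
    and correct: "\<And>c \<alpha>. valid \<mu> C (c 0) \<Longrightarrow> execution R c \<alpha> \<Longrightarrow> weakly_fair R c \<alpha> \<Longrightarrow>
      \<exists>t. c t \<in> goal (c 0)"
  shows "\<exists>\<rho> (f :: nat \<Rightarrow> real). runtime_policy R \<rho> \<and> (\<forall>n\<ge>1. 0 \<le> f n) \<and>
     (\<forall>n\<ge>1. \<forall>c \<alpha> \<sigma>. (c, \<alpha>) \<in> Fset R \<mu> C n \<and> skipping_policy \<sigma> \<longrightarrow>
        prefix_runtime (vol n) R c \<alpha> \<rho> \<sigma> (LEAST t. c t \<in> goal (c 0)) \<le> ennreal (f n))"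
proof -
  obtain K where K: "\<forall>c c'. 0 < csize c \<longrightarrow> reach R c c' \<longrightarrow> csize c' \<le> K * csize c"
    using crn_finite_density[OF crn] by blast
  define f where "f n = (real (card {y :: 's config. csize y \<le> K * n}) + 1) * (1 / min_propensity (vol n) R)"
    for n
  have "0 \<le> f n" if "1 \<le> n" for n
    using min_propensity_pos[OF crn vol[OF that]] by (simp add: f_def)
  moreover have "prefix_runtime (vol n) R c \<alpha> (escape_policy R) \<sigma> (LEAST t. c t \<in> goal (c 0)) \<le> ennreal (f n)"
    if "1 \<le> n" "(c, \<alpha>) \<in> Fset R \<mu> C n" "skipping_policy \<sigma>" for n c \<alpha> \<sigma>
  proof -
    have exec: "execution R c \<alpha>" "weakly_fair R c \<alpha>" and "valid \<mu> C (c 0)"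
      and n: "csize (c 0) = n"
      using that(2) by (auto simp: Fset_def)
    have goal_closed: "y \<in> goal (c 0) \<Longrightarrow> reach R y z \<Longrightarrow> z \<in> goal (c 0)" for y z
      by (rule closed)
    have goal_reached: "execution R d \<beta> \<Longrightarrow> weakly_fair R d \<beta> \<Longrightarrow> d 0 = c 0 \<Longrightarrow>
        \<exists>t. d t \<in> goal (c 0)" for d \<beta>
      using correct[of d \<beta>] \<open>valid \<mu> C (c 0)\<close> by simp
    have "0 < csize (c 0)" using n that(1) by simp
    from crn goal_closed goal_reached exec this that(3) vol[OF that(1)] K
    have "prefix_runtime (vol n) R c \<alpha> (escape_policy R) \<sigma> (LEAST t. c t \<in> goal (c 0))
      \<le> ennreal ((real (card {y :: 's config. csize y \<le> K * csize (c 0)}) + 1) * (1 / min_propensity (vol n) R))"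
      by (rule runtime_before_goal_le)
    then show ?thesis by (simp add: f_def n)
  qed
  ultimately show ?thesis using runtime_policy_escape_policy by blast
qed

lemma stab_reach_closed: "y \<in> stab R Z \<Longrightarrow> reach R y z \<Longrightarrow> z \<in> stab R Z"
  unfolding stab_def using reach_trans by blast

lemma halt_reach_closed: "y \<in> halt R Z \<Longrightarrow> reach R y z \<Longrightarrow> z \<in> halt R Z"
  unfolding halt_def by blast

theorem lemma4p2:
  fixes R :: "('s::finite) reaction set"
    and \<mu> :: "'s \<Rightarrow> 'u"
    and C :: "('u config \<times> 'u config) set"
    and vol :: "nat \<Rightarrow> real"
  assumes "crn R"
    and "\<exists>a b. 0 < a \<and> 0 < b \<and> (\<forall>n\<ge>1. a * real n \<le> vol n \<and> vol n \<le> b * real n)"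
  shows "(stably_correct R \<mu> C \<longrightarrow>
           (\<exists>\<rho> (f :: nat \<Rightarrow> real). runtime_policy R \<rho> \<and> (\<forall>n\<ge>1. 0 \<le> f n) \<and>
              (\<forall>n\<ge>1. \<forall>c \<alpha> \<sigma>. (c, \<alpha>) \<in> Fset R \<mu> C n \<and> skipping_policy \<sigma> \<longrightarrow>
                  RT_stab (vol n) R \<mu> C c \<alpha> \<rho> \<sigma> \<le> ennreal (f n))))
       \<and> (haltingly_correct R \<mu> C \<longrightarrow>
           (\<exists>\<rho> (f :: nat \<Rightarrow> real). runtime_policy R \<rho> \<and> (\<forall>n\<ge>1. 0 \<le> f n) \<and>
              (\<forall>n\<ge>1. \<forall>c \<alpha> \<sigma>. (c, \<alpha>) \<in> Fset R \<mu> C n \<and> skipping_policy \<sigma> \<longrightarrow>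
                  RT_halt (vol n) R \<mu> C c \<alpha> \<rho> \<sigma> \<le> ennreal (f n))))"
proof -
  obtain a where a: "0 < a" "\<forall>n\<ge>1. a * real n \<le> vol n" using assms(2) by blast
  have vol: "0 < vol n" if "1 \<le> n" for n
  proof -
    have "0 < a * real n" using a(1) that by simp
    also have "\<dots> \<le> vol n" using a(2) that by blast
    finally show ?thesis .
  qed
  show ?thesis
  proof (intro conjI impI)
    assume "stably_correct R \<mu> C"
    then show "\<exists>\<rho> f. runtime_policy R \<rho> \<and> (\<forall>n\<ge>1. 0 \<le> f n) \<and>
        (\<forall>n\<ge>1. \<forall>c \<alpha> \<sigma>. (c, \<alpha>) \<in> Fset R \<mu> C n \<and> skipping_policy \<sigma> \<longrightarrow>
          RT_stab (vol n) R \<mu> C c \<alpha> \<rho> \<sigma> \<le> ennreal (f n))"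
      unfolding RT_stab_def stab_step_def stably_correct_def
      by (intro runtime_bound_for_closed_goal[OF assms(1) vol stab_reach_closed]) blast+
  next
    assume "haltingly_correct R \<mu> C"
    then show "\<exists>\<rho> f. runtime_policy R \<rho> \<and> (\<forall>n\<ge>1. 0 \<le> f n) \<and>
        (\<forall>n\<ge>1. \<forall>c \<alpha> \<sigma>. (c, \<alpha>) \<in> Fset R \<mu> C n \<and> skipping_policy \<sigma> \<longrightarrow>
          RT_halt (vol n) R \<mu> C c \<alpha> \<rho> \<sigma> \<le> ennreal (f n))"
      unfolding RT_halt_def halt_step_def haltingly_correct_def
      by (intro runtime_bound_for_closed_goal[OF assms(1) vol halt_reach_closed]) blast+
  qed
qed

end
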